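(* Assume $|\sigma(u)|\le M_\sigma$ for all $u\in\mathbb R$ and $M_2<\infty$. Let $\bar w=(\bar w_1,\bar w_2)\in\mathsf W$ be a minimizer of $w\mapsto\|f_w-f_{\mathbf P}\|_{\mathbb L_2(\mu)}$ and $p=\mathcal N(\bar w_1,\tau_1^2\mathbf I_{D_0D_1})\otimes\mathcal N(\bar w_2,\tau_2^2\mathbf I_{D_1D_2})$ with $\tau_1,\tau_2>0$. Then, with $G_1(w)=\|f_w-f_{w_1,\bar w_2}\|^2_{\mathbb L_2(\mu)}$, $$\int_{\mathsf W}G_1(w)\,p(dw)\le(M_\sigma\tau_2)^2\mu(\mathcal X)D_1D_2.$$
   Context: $\mathcal X\subset\mathbb R^{D_0}$ Borel, $\mu$ a $\sigma$-finite measure on $\mathcal X$, $M_2^2=D_0^{-1}\int\|x\|_2^2\mu(dx)$, $\|f\|^2_{\mathbb L_2(\mu)}=\int\|f(x)\|_2^2\mu(dx)$, $f_{\mathbf P}\in\mathbb L_2(\mu)$ a given target. Parameters $w=(w_1,w_2)\in\mathsf W=\mathbb R^{D_0\times D_1}\times\mathbb R^{D_1\times D_2}$; $f_w=f_{w_1,w_2}$, $f_w(x)=w_2^\top\bar\sigma(w_1^\top x)$, $\bar\sigma$ applying $\sigma$ coordinatewise. *)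

theory Defs
  imports "HOL-Probability.Probability"
begin

definition sigma_bar :: "(real \<Rightarrow> real) \<Rightarrow> real^'n \<Rightarrow> real^'n" where
  "sigma_bar \<sigma> v = (\<chi> i. \<sigma> (v $ i))"

definition fnet :: "(real \<Rightarrow> real) \<Rightarrow> real^'d1^'d0 \<Rightarrow> real^'d2^'d1 \<Rightarrow> real^'d0 \<Rightarrow> real^'d2" where
  "fnet \<sigma> w1 w2 x = transpose w2 *v sigma_bar \<sigma> (transpose w1 *v x)"

definition L2sq :: "'a measure \<Rightarrow> ('a \<Rightarrow> 'b::real_normed_vector) \<Rightarrow> ennreal" where
  "L2sq \<mu> f = (\<integral>\<^sup>+ x. ennreal ((norm (f x))\<^sup>2) \<partial>\<mu>)"

text \<open>Isotropic Gaussian N(m, tau^2 I) on matrices: product of one-dimensional normals.\<close>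
definition gauss_mat :: "real^'n^'m \<Rightarrow> real \<Rightarrow> (real^'n^'m) measure" where
  "gauss_mat m \<tau> = density lborel
     (\<lambda>w. ennreal (\<Prod>i\<in>UNIV. \<Prod>j\<in>UNIV. normal_density (m $ i $ j) \<tau> (w $ i $ j)))"

end

theory Submission
  imports Defs
begin

(* Only the second-layer perturbation enters G1: its integrand is |(w2 - wb2)^T s|^2 with
   s = sigma_bar (w1^T x), and |s|^2 <= D1 M^2.  The coordinates of an isotropic Gaussian are
   independent and centred, so E ((w - m) . u)^2 = tau^2 |u|^2; applied to the D2 columns this
   gives E_w2 |(w2 - wb2)^T s|^2 = tau2^2 D2 |s|^2, whatever w1 is.  Tonelli then integrates this
   uniform bound over mu. *)

lemma
  fixes f :: "'a::euclidean_space \<Rightarrow> real \<Rightarrow> real"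
  assumes f: "\<And>b. b \<in> Basis \<Longrightarrow> integrable lborel (f b)"
  shows integrable_lborel_prod: "integrable lborel (\<lambda>x::'a. \<Prod>b\<in>Basis. f b (x \<bullet> b))"
    and integral_lborel_prod:
      "(\<integral>x. (\<Prod>b\<in>Basis. f b (x \<bullet> b)) \<partial>(lborel::'a measure)) = (\<Prod>b\<in>Basis. \<integral>y. f b y \<partial>lborel)"
proof -
  interpret product_sigma_finite "\<lambda>_::'a. lborel::real measure" by standard
  have [measurable]: "f b \<in> borel_measurable borel" if "b \<in> Basis" for b
    using f[OF that] by auto
  have coords: "(\<Prod>b\<in>Basis. f b ((\<Sum>c\<in>Basis. y c *\<^sub>R c) \<bullet> b)) = (\<Prod>b\<in>Basis. f b (y b))" for y
    by (intro prod.cong) auto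
  have integrable_Pi: "integrable (\<Pi>\<^sub>M b\<in>Basis. lborel) (\<lambda>y. \<Prod>b\<in>Basis. f b (y b))"
    by (intro product_integrable_prod f) auto
  show "integrable lborel (\<lambda>x::'a. \<Prod>b\<in>Basis. f b (x \<bullet> b))"
    by (subst lborel_eq) (simp add: integrable_distr_eq coords integrable_Pi)
  show "(\<integral>x. (\<Prod>b\<in>Basis. f b (x \<bullet> b)) \<partial>(lborel::'a measure)) = (\<Prod>b\<in>Basis. \<integral>y. f b y \<partial>lborel)"
    by (subst lborel_eq) (simp add: integral_distr coords product_integral_prod f)
qed

definition iso_normal_density :: "'a::euclidean_space \<Rightarrow> real \<Rightarrow> 'a \<Rightarrow> real" where
  "iso_normal_density m \<tau> w = (\<Prod>b\<in>Basis. normal_density (m \<bullet> b) \<tau> (w \<bullet> b))"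

lemma borel_measurable_iso_normal_density[measurable]:
  "iso_normal_density m \<tau> \<in> borel_measurable borel"
  unfolding iso_normal_density_def by measurable

lemma iso_normal_density_nonneg: "0 \<le> iso_normal_density m \<tau> w"
  unfolding iso_normal_density_def by (intro prod_nonneg) auto

lemma prob_space_iso_normal_density:
  assumes "\<tau> > 0"
  shows "prob_space (density lborel (\<lambda>w. ennreal (iso_normal_density m \<tau> w)))"
proof (rule prob_spaceI)
  have "(\<integral>w. iso_normal_density m \<tau> w \<partial>lborel) = 1"
    unfolding iso_normal_density_def using assms by (subst integral_lborel_prod) auto
  moreover have "integrable lborel (iso_normal_density m \<tau>)"
    unfolding iso_normal_density_def using assms by (intro integrable_lborel_prod) simp
  ultimately have "(\<integral>\<^sup>+ w. ennreal (iso_normal_density m \<tau> w) \<partial>lborel) = 1"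
    by (subst nn_integral_eq_integral) (auto simp: iso_normal_density_nonneg)
  then show "emeasure (density lborel (\<lambda>w. ennreal (iso_normal_density m \<tau> w)))
      (space (density lborel (\<lambda>w. ennreal (iso_normal_density m \<tau> w)))) = 1"
    by (simp add: emeasure_density)
qed

lemma
  fixes m :: "'a::euclidean_space"
  assumes \<tau>: "\<tau> > 0" and b: "b \<in> Basis" and c: "c \<in> Basis"
  shows integrable_iso_normal_covariance:
      "integrable lborel (\<lambda>w. iso_normal_density m \<tau> w * ((w - m) \<bullet> b) * ((w - m) \<bullet> c))"
    and integral_iso_normal_covariance:
      "(\<integral>w. iso_normal_density m \<tau> w * ((w - m) \<bullet> b) * ((w - m) \<bullet> c) \<partial>lborel)
         = (if b = c then \<tau>\<^sup>2 else 0)"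
proof -
  \<comment> \<open>the two linear factors become powers \<open>k d \<in> {0, 1, 2}\<close> of the coordinates\<close>
  define k where "k d = (of_bool (d = b) + of_bool (d = c) :: nat)" for d :: 'a
  define f where "f d y = normal_density (m \<bullet> d) \<tau> y * (y - m \<bullet> d) ^ k d" for d y
  have delta: "(\<Prod>d\<in>Basis. y d ^ of_bool (d = e)) = y e" if "e \<in> Basis" for y :: "'a \<Rightarrow> real" and e
  proof -
    have "(\<Prod>d\<in>Basis. y d ^ of_bool (d = e)) = (\<Prod>d\<in>Basis. if d = e then y d else 1)"
      by (rule prod.cong) auto
    then show ?thesis
      using that by simp
  qed
  have factor: "iso_normal_density m \<tau> w * ((w - m) \<bullet> b) * ((w - m) \<bullet> c)
      = (\<Prod>d\<in>Basis. f d (w \<bullet> d))" for w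
    using b c by (simp add: f_def k_def iso_normal_density_def prod.distrib power_add delta
        inner_diff_left)
  have f_integrable: "integrable lborel (f d)" for d
    unfolding f_def by (rule integrable_normal_moment[OF \<tau>])
  show "integrable lborel (\<lambda>w. iso_normal_density m \<tau> w * ((w - m) \<bullet> b) * ((w - m) \<bullet> c))"
    unfolding factor by (rule integrable_lborel_prod[OF f_integrable])
  have "(\<integral>w. iso_normal_density m \<tau> w * ((w - m) \<bullet> b) * ((w - m) \<bullet> c) \<partial>lborel)
      = (\<Prod>d\<in>Basis. \<integral>y. f d y \<partial>lborel)"
    unfolding factor by (rule integral_lborel_prod[OF f_integrable])
  also have "\<dots> = (if b = c then \<tau>\<^sup>2 else 0)"
  proof (cases "b = c")
    case True
    have "(\<integral>y. f d y \<partial>lborel) = (if d = b then \<tau>\<^sup>2 else 1)" for d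
      using integral_normal_moment_even[OF \<tau>, of "m \<bullet> d" 1] True \<tau>
      by (cases "d = b") (simp_all add: f_def k_def power2_eq_square)
    then show ?thesis
      using True b by (simp add: prod.delta')
  next
    case False
    have "(\<integral>y. f b y \<partial>lborel) = 0"
      using integral_normal_moment_odd[OF \<tau>, of "m \<bullet> b" 0] False by (simp add: f_def k_def)
    then show ?thesis
      using False b by (auto simp: prod_zero_iff)
  qed
  finally show "(\<integral>w. iso_normal_density m \<tau> w * ((w - m) \<bullet> b) * ((w - m) \<bullet> c) \<partial>lborel)
         = (if b = c then \<tau>\<^sup>2 else 0)" .
qed

lemma nn_integral_iso_normal_inner_square:
  fixes m u :: "'a::euclidean_space"
  assumes \<tau>: "\<tau> > 0"
  shows "(\<integral>\<^sup>+ w. ennreal (((w - m) \<bullet> u)\<^sup>2) \<partial>density lborel (\<lambda>w. ennreal (iso_normal_density m \<tau> w)))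
    = ennreal (\<tau>\<^sup>2 * (norm u)\<^sup>2)"
proof -
  let ?g = "iso_normal_density m \<tau>"
  have expand: "?g w * ((w - m) \<bullet> u)\<^sup>2
      = (\<Sum>b\<in>Basis. \<Sum>c\<in>Basis. (u \<bullet> b) * (u \<bullet> c) * (?g w * ((w - m) \<bullet> b) * ((w - m) \<bullet> c)))" for w
    by (simp add: euclidean_inner[of "w - m" u] power2_eq_square sum_product sum_distrib_left ac_simps)
  have integrable: "integrable lborel (\<lambda>w. ?g w * ((w - m) \<bullet> u)\<^sup>2)"
    unfolding expand
    by (intro Bochner_Integration.integrable_sum integrable_mult_right integrable_iso_normal_covariance \<tau>)
  have "(\<integral>\<^sup>+ w. ennreal (((w - m) \<bullet> u)\<^sup>2) \<partial>density lborel (\<lambda>w. ennreal (?g w)))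
      = (\<integral>\<^sup>+ w. ennreal (?g w * ((w - m) \<bullet> u)\<^sup>2) \<partial>lborel)"
    by (simp add: nn_integral_density ennreal_mult' iso_normal_density_nonneg)
  also have "\<dots> = ennreal (\<integral>w. ?g w * ((w - m) \<bullet> u)\<^sup>2 \<partial>lborel)"
    by (rule nn_integral_eq_integral[OF integrable]) (simp add: iso_normal_density_nonneg)
  also have "(\<integral>w. ?g w * ((w - m) \<bullet> u)\<^sup>2 \<partial>lborel)
      = (\<Sum>b\<in>Basis. \<Sum>c\<in>Basis. (u \<bullet> b) * (u \<bullet> c) * (if b = c then \<tau>\<^sup>2 else 0))"
    unfolding expand
    by (simp add: Bochner_Integration.integral_sum Bochner_Integration.integrable_sum
        integrable_iso_normal_covariance integral_iso_normal_covariance \<tau> del: mult_if_delta)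
  also have "\<dots> = \<tau>\<^sup>2 * (norm u)\<^sup>2"
    by (simp add: if_distrib[of "\<lambda>x. _ * x"] power2_norm_eq_inner euclidean_inner[of u u]
        sum_distrib_left ac_simps cong: if_cong)
  finally show ?thesis .
qed

lemma prod_Basis_vec:
  "(\<Prod>b\<in>(Basis :: ('a::euclidean_space ^ 'n) set). f b) = (\<Prod>i\<in>UNIV. \<Prod>u\<in>Basis. f (axis i u))"
proof -
  have "(Basis :: ('a ^ 'n) set) = (\<Union>i. axis i ` Basis)"
    by (auto simp: Basis_vec_def)
  moreover have "(\<Prod>b\<in>(\<Union>i. axis i ` Basis). f b) = (\<Prod>i\<in>UNIV. \<Prod>b\<in>axis i ` Basis. f b)"
    by (rule prod.UNION_disjoint) (auto simp: axis_eq_axis)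
  ultimately have "(\<Prod>b\<in>(Basis :: ('a ^ 'n) set). f b) = (\<Prod>i\<in>UNIV. \<Prod>b\<in>axis i ` Basis. f b)"
    by simp
  also have "\<dots> = (\<Prod>i\<in>UNIV. \<Prod>u\<in>Basis. f (axis i u))"
    by (simp add: prod.reindex inj_on_def axis_eq_axis)
  finally show ?thesis .
qed

lemma gauss_mat_eq_density_iso_normal:
  "gauss_mat m \<tau> = density lborel (\<lambda>w. ennreal (iso_normal_density m \<tau> w))"
  by (simp add: gauss_mat_def iso_normal_density_def prod_Basis_vec inner_axis)

lemma prob_space_gauss_mat:
  assumes "\<tau> > 0"
  shows "prob_space (gauss_mat m \<tau>)"
  unfolding gauss_mat_eq_density_iso_normal using assms by (rule prob_space_iso_normal_density)

lemma sets_gauss_mat[measurable_cong]: "sets (gauss_mat m \<tau>) = sets borel"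
  by (simp add: gauss_mat_def)

lemma norm_vec_square: "(norm (v::real^'n))\<^sup>2 = (\<Sum>k\<in>UNIV. (v $ k)\<^sup>2)"
  unfolding power2_norm_eq_inner inner_vec_def by (simp add: power2_eq_square)

lemma norm_transpose_mult_vec_square:
  fixes A :: "real^'k^'n" and s :: "real^'n"
  defines "u k \<equiv> (\<chi> i. axis k (s $ i))"
  shows "(norm (transpose A *v s))\<^sup>2 = (\<Sum>k\<in>UNIV. (A \<bullet> u k)\<^sup>2)" and "norm (u k) = norm s"
proof -
  have "(transpose A *v s) $ k = A \<bullet> u k" for k
    unfolding inner_vec_def[of A] by (simp add: u_def matrix_vector_mult_def transpose_def inner_axis mult.commute)
  then show "(norm (transpose A *v s))\<^sup>2 = (\<Sum>k\<in>UNIV. (A \<bullet> u k)\<^sup>2)"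
    by (simp only: norm_vec_square)
  show "norm (u k) = norm s"
    unfolding norm_eq_sqrt_inner inner_vec_def[of "u k"] inner_vec_def[of s] by (simp add: u_def inner_axis_axis)
qed

lemma nn_integral_gauss_mat_norm_transpose_square:
  fixes m :: "real^'k^'n" and s :: "real^'n"
  assumes \<tau>: "\<tau> > 0"
  shows "(\<integral>\<^sup>+ w. ennreal ((norm (transpose (w - m) *v s))\<^sup>2) \<partial>gauss_mat m \<tau>)
    = ennreal (\<tau>\<^sup>2 * real CARD('k) * (norm s)\<^sup>2)"
proof -
  define u where "u k = (\<chi> i. axis k (s $ i))" for k :: 'k
  have "(\<integral>\<^sup>+ w. ennreal ((norm (transpose (w - m) *v s))\<^sup>2) \<partial>gauss_mat m \<tau>)
      = (\<integral>\<^sup>+ w. (\<Sum>k\<in>UNIV. ennreal (((w - m) \<bullet> u k)\<^sup>2)) \<partial>gauss_mat m \<tau>)"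
    unfolding norm_transpose_mult_vec_square(1) u_def
    by (intro nn_integral_cong) (simp add: sum_ennreal)
  also have "\<dots> = (\<Sum>k\<in>UNIV. \<integral>\<^sup>+ w. ennreal (((w - m) \<bullet> u k)\<^sup>2) \<partial>gauss_mat m \<tau>)"
    by (rule nn_integral_sum) (simp add: gauss_mat_eq_density_iso_normal)
  also have "\<dots> = (\<Sum>k\<in>(UNIV :: 'k set). ennreal (\<tau>\<^sup>2 * (norm s)\<^sup>2))"
    unfolding gauss_mat_eq_density_iso_normal nn_integral_iso_normal_inner_square[OF \<tau>] u_def
      norm_transpose_mult_vec_square(2) ..
  also have "\<dots> = ennreal (\<tau>\<^sup>2 * real CARD('k) * (norm s)\<^sup>2)"
    by (simp add: ennreal_of_nat_eq_real_of_nat ennreal_mult'[symmetric] ac_simps)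
  finally show ?thesis .
qed

lemma borel_measurable_mat_nth[measurable]: "(\<lambda>w::real^'n^'m. w $ i $ j) \<in> borel_measurable borel"
proof -
  have "(\<lambda>w::real^'n^'m. w $ i $ j) = (\<lambda>w. w \<bullet> axis i (axis j 1))"
    by (simp add: inner_axis)
  then show ?thesis
    by simp
qed

lemma borel_measurable_vec_nthI:
  fixes f :: "'a \<Rightarrow> real^'n"
  assumes "\<And>k. (\<lambda>y. f y $ k) \<in> borel_measurable M"
  shows "f \<in> borel_measurable M"
  using assms by (auto simp: borel_measurable_euclidean_space[where 'c="real^'n"] Basis_vec_def inner_axis)

lemma fnet_nth: "fnet \<sigma> w1 w2 x $ k = (\<Sum>i\<in>UNIV. w2 $ i $ k * \<sigma> (\<Sum>j\<in>UNIV. w1 $ j $ i * x $ j))"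
  by (simp add: fnet_def matrix_vector_mult_def transpose_def sigma_bar_def mult.commute)

lemma borel_measurable_fnet[measurable]:
  assumes [measurable]: "\<sigma> \<in> borel_measurable borel"
    and [measurable]: "w1 \<in> borel_measurable M" "w2 \<in> borel_measurable M" "x \<in> borel_measurable M"
  shows "(\<lambda>y. fnet \<sigma> (w1 y) (w2 y) (x y)) \<in> borel_measurable M"
proof (rule borel_measurable_vec_nthI)
  have [measurable]: "(\<lambda>y. x y $ j) \<in> borel_measurable M" for j
    by (rule measurable_compose[OF _ borel_measurable_nth]) simp
  show "(\<lambda>y. fnet \<sigma> (w1 y) (w2 y) (x y) $ k) \<in> borel_measurable M" for k
    unfolding fnet_nth by measurable
qed

lemma fnet_diff_second_layer:
  "fnet \<sigma> w1 w2 x - fnet \<sigma> w1 w2' x = transpose (w2 - w2') *v sigma_bar \<sigma> (transpose w1 *v x)"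
  by (simp add: fnet_def vec_eq_iff matrix_vector_mult_def transpose_def sum_subtractf left_diff_distrib)

lemma norm_sigma_bar_square_le:
  assumes "\<And>u. \<bar>\<sigma> u\<bar> \<le> M"
  shows "(norm (sigma_bar \<sigma> (v::real^'n)))\<^sup>2 \<le> real CARD('n) * M\<^sup>2"
proof -
  have "(\<sigma> u)\<^sup>2 \<le> M\<^sup>2" for u
    using power_mono[OF assms[of u], of 2] by simp
  then have "(\<Sum>i\<in>UNIV. (\<sigma> (v $ i))\<^sup>2) \<le> (\<Sum>i\<in>(UNIV::'n set). M\<^sup>2)"
    by (intro sum_mono)
  then show ?thesis
    by (simp add: norm_vec_square sigma_bar_def)
qed

lemma nn_integral_gauss_second_layer_le:
  fixes P1 :: "(real^'d1^'d0) measure" and wb2 :: "real^'d2^'d1"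
  assumes P1: "prob_space P1" "sets P1 = sets borel"
    and \<sigma>: "\<sigma> \<in> borel_measurable borel" "\<And>u. \<bar>\<sigma> u\<bar> \<le> M"
    and \<tau>: "\<tau> > 0"
  shows "(\<integral>\<^sup>+ w. ennreal ((norm (fnet \<sigma> (fst w) (snd w) x - fnet \<sigma> (fst w) wb2 x))\<^sup>2)
      \<partial>(P1 \<Otimes>\<^sub>M gauss_mat wb2 \<tau>)) \<le> ennreal ((M * \<tau>)\<^sup>2 * real CARD('d1) * real CARD('d2))"
    (is "?I \<le> ennreal ?C")
proof -
  interpret P1: prob_space P1 by (rule P1(1))
  interpret P2: prob_space "gauss_mat wb2 \<tau>" by (rule prob_space_gauss_mat[OF \<tau>])
  note [measurable] = \<sigma>(1) and [measurable_cong] = P1(2)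
  have "?I = (\<integral>\<^sup>+ w1. \<integral>\<^sup>+ w2. ennreal ((norm (fnet \<sigma> w1 w2 x - fnet \<sigma> w1 wb2 x))\<^sup>2)
      \<partial>gauss_mat wb2 \<tau> \<partial>P1)"
    using P2.nn_integral_fst[of "\<lambda>w. ennreal ((norm (fnet \<sigma> (fst w) (snd w) x - fnet \<sigma> (fst w) wb2 x))\<^sup>2)" P1]
    by simp
  also have "\<dots> \<le> (\<integral>\<^sup>+ w1. ennreal ?C \<partial>P1)"
  proof (rule nn_integral_mono)
    fix w1 :: "real^'d1^'d0"
    let ?s = "sigma_bar \<sigma> (transpose w1 *v x)"
    have "(\<integral>\<^sup>+ w2. ennreal ((norm (fnet \<sigma> w1 w2 x - fnet \<sigma> w1 wb2 x))\<^sup>2) \<partial>gauss_mat wb2 \<tau>)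
        = ennreal (\<tau>\<^sup>2 * real CARD('d2) * (norm ?s)\<^sup>2)"
      unfolding fnet_diff_second_layer by (rule nn_integral_gauss_mat_norm_transpose_square[OF \<tau>])
    also have "\<dots> \<le> ennreal ?C"
    proof (intro ennreal_leI)
      have "\<tau>\<^sup>2 * real CARD('d2) * (norm ?s)\<^sup>2 \<le> \<tau>\<^sup>2 * real CARD('d2) * (real CARD('d1) * M\<^sup>2)"
        by (intro mult_left_mono norm_sigma_bar_square_le \<sigma>(2)) auto
      then show "\<tau>\<^sup>2 * real CARD('d2) * (norm ?s)\<^sup>2 \<le> ?C"
        by (simp add: power_mult_distrib ac_simps)
    qed
    finally show "(\<integral>\<^sup>+ w2. ennreal ((norm (fnet \<sigma> w1 w2 x - fnet \<sigma> w1 wb2 x))\<^sup>2) \<partial>gauss_mat wb2 \<tau>)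
        \<le> ennreal ?C" .
  qed
  also have "\<dots> = ennreal ?C"
    by (simp add: P1.emeasure_space_1)
  finally show ?thesis .
qed

theorem lemma4:
  fixes \<sigma> :: "real \<Rightarrow> real" and M\<sigma> \<tau>1 \<tau>2 :: real
    and X :: "(real^'d0) set" and \<mu> :: "(real^'d0) measure"
    and fP :: "real^'d0 \<Rightarrow> real^'d2"
    and wb1 :: "real^'d1^'d0" and wb2 :: "real^'d2^'d1"
  assumes X_borel: "X \<in> sets borel"
    and mu_sets: "sets \<mu> = sets (restrict_space borel X)"
    and mu_sfin: "sigma_finite_measure \<mu>"
    and sigma_meas: "\<sigma> \<in> borel_measurable borel"
    and sigma_bdd: "\<forall>u. \<bar>\<sigma> u\<bar> \<le> M\<sigma>"
    and M2_fin: "(\<integral>\<^sup>+ x. ennreal ((norm x)\<^sup>2 / real CARD('d0)) \<partial>\<mu>) < \<infinity>"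
    and fP_meas: "fP \<in> borel_measurable \<mu>"
    and fP_L2: "L2sq \<mu> fP < \<infinity>"
    and minimizer: "\<forall>(w1::real^'d1^'d0) (w2::real^'d2^'d1). L2sq \<mu> (\<lambda>x. fnet \<sigma> wb1 wb2 x - fP x)
                            \<le> L2sq \<mu> (\<lambda>x. fnet \<sigma> w1 w2 x - fP x)"
    and tau1: "\<tau>1 > 0" and tau2: "\<tau>2 > 0"
  shows "(\<integral>\<^sup>+ w. L2sq \<mu> (\<lambda>x. fnet \<sigma> (fst w) (snd w) x - fnet \<sigma> (fst w) wb2 x)
            \<partial>(gauss_mat wb1 \<tau>1 \<Otimes>\<^sub>M gauss_mat wb2 \<tau>2))
         \<le> ennreal ((M\<sigma> * \<tau>2)\<^sup>2 * real CARD('d1) * real CARD('d2)) * emeasure \<mu> X"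
proof -
  let ?P = "gauss_mat wb1 \<tau>1 \<Otimes>\<^sub>M gauss_mat wb2 \<tau>2"
  let ?C = "(M\<sigma> * \<tau>2)\<^sup>2 * real CARD('d1) * real CARD('d2)"
  interpret P: prob_space ?P
    by (intro prob_space_pair prob_space_gauss_mat tau1 tau2)
  interpret \<mu>: sigma_finite_measure \<mu> by (rule mu_sfin)
  interpret pair_sigma_finite ?P \<mu> ..
  note [measurable] = sigma_meas
  have [measurable]: "(\<lambda>x. x) \<in> borel_measurable \<mu>"
    unfolding measurable_cong_sets[OF mu_sets refl] by (rule measurable_restrict_space1) simp
  have "(\<integral>\<^sup>+ w. L2sq \<mu> (\<lambda>x. fnet \<sigma> (fst w) (snd w) x - fnet \<sigma> (fst w) wb2 x) \<partial>?P)
      = (\<integral>\<^sup>+ x. \<integral>\<^sup>+ w. ennreal ((norm (fnet \<sigma> (fst w) (snd w) x - fnet \<sigma> (fst w) wb2 x))\<^sup>2) \<partial>?P \<partial>\<mu>)"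
    unfolding L2sq_def
    using Fubini[of "\<lambda>(w, x). ennreal ((norm (fnet \<sigma> (fst w) (snd w) x - fnet \<sigma> (fst w) wb2 x))\<^sup>2)"]
    by simp
  also have "\<dots> \<le> (\<integral>\<^sup>+ x. ennreal ?C \<partial>\<mu>)"
    using sigma_bdd
    by (intro nn_integral_mono nn_integral_gauss_second_layer_le prob_space_gauss_mat tau1 tau2 sigma_meas sets_gauss_mat) auto
  also have "\<dots> = ennreal ?C * emeasure \<mu> X"
    using sets_eq_imp_space_eq[OF mu_sets] X_borel by simp
  finally show ?thesis .
qed

end
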